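(* For every countable subset $\Sigma \subseteq \mathbb{C}$ and every dense subset $T \subseteq \mathbb{C}$ there is a transcendental entire function $f$ such that $f^{(s)}(\Sigma) \subseteq T$ for all integers $s \geq 0$.
   Context: A transcendental entire function is an entire function $\mathbb{C}\to\mathbb{C}$ that is not a polynomial. $f^{(s)}$ denotes the $s$-th derivative of $f$, with $f^{(0)}=f$. *)

theory Defs
  imports "HOL-Analysis.Analysis" "HOL-Computational_Algebra.Polynomial"
begin

definition transcendental_entire :: "(complex \<Rightarrow> complex) \<Rightarrow> bool" where
  "transcendental_entire f \<longleftrightarrow>
     f holomorphic_on UNIV \<and> \<not> (\<exists>p :: complex poly. \<forall>z. f z = poly p z)"

end

theory Submission
  imports Defs
begin

(* Enumerate all pairs (sigma, s) with sigma in Sigma' = insert 0 Sigma and s a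
   derivative order as "tasks" n = 0, 1, 2, ..., each task at a point occurring after all tasks
   of lower order at the same point.  For task n take the polynomial Q n that has a zero of
   order exactly od n at its own point pt n and zeros of order od j + 1 at the points of all
   earlier tasks j at other points.  Then adding a multiple c n * Q n never disturbs the
   derivatives fixed by earlier tasks, while c n can be chosen (greedily, using the density of
   T) to push the od n-th derivative at pt n into T - {0}.  Choosing also |c n| so small that
   all derivatives of c n * Q n are bounded by (1/2)^n on growing discs, the series
   F = sum c n * Q n converges to an entire function that may be differentiated termwise.
   Finally, since 0 is among the points, all derivatives of F at 0 are nonzero, so F is no
   polynomial. *)

section \<open>Higher derivatives of polynomials\<close>

lemma higher_pderiv_linear_power_mult:
  fixes a :: "'a::{idom,ring_char_0}" and g :: "'a poly"
  assumes "k \<le> m"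
  shows "\<exists>h. (pderiv ^^ k) ([:-a,1:]^m * g) = [:-a,1:]^(m - k) * h \<and>
             (poly g a \<noteq> 0 \<longrightarrow> poly h a \<noteq> 0)"
  using assms
proof (induction k)
  case 0
  then show ?case by auto
next
  case (Suc k)
  then obtain h where h: "(pderiv ^^ k) ([:-a,1:]^m * g) = [:-a,1:]^(m - k) * h"
    and h_nz: "poly g a \<noteq> 0 \<longrightarrow> poly h a \<noteq> 0" by auto
  obtain j where j: "m - k = Suc j" using Suc.prems by (metis Suc_diff_Suc Suc_le_lessD)
  define h' where "h' = smult (of_nat (Suc j)) h + [:-a,1:] * pderiv h"
  have "(pderiv ^^ Suc k) ([:-a,1:]^m * g) = pderiv ([:-a,1:]^Suc j * h)" using h j by simp
  also have "\<dots> = [:-a,1:]^j * h'"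
  proof -
    have "pderiv [:-a,1:] = (1::'a poly)" by (simp add: pderiv_pCons)
    have "pderiv ([:-a,1:]^Suc j * h) = pderiv ([:-a,1:]^Suc j) * h + [:-a,1:]^Suc j * pderiv h"
      by (metis pderiv_mult add.commute mult.commute)
    also have "pderiv ([:-a,1:]^Suc j) = smult (of_nat (Suc j)) ([:-a,1:]^j)"
      by (simp only: pderiv_power_Suc \<open>pderiv [:-a,1:] = 1\<close> mult_1_right)
    finally show ?thesis
      unfolding h'_def
      by (simp only: power_Suc distrib_left mult_smult_left mult_smult_right mult.assoc
          mult.left_commute[of "[:-a,1:]"])
  qed
  also have "j = m - Suc k" using j by simp
  finally have "(pderiv ^^ Suc k) ([:-a,1:]^m * g) = [:-a,1:]^(m - Suc k) * h'" .
  moreover have "poly g a \<noteq> 0 \<longrightarrow> poly h' a \<noteq> 0"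
  proof -
    have "poly [:-a,1:] a = 0" by simp
    then have "poly h' a = of_nat (Suc j) * poly h a"
      unfolding h'_def by (simp only: poly_add poly_smult poly_mult mult_zero_left add_0_right)
    then show ?thesis using h_nz of_nat_neq_0[of j] by (metis mult_eq_0_iff)
  qed
  ultimately show ?case by (intro exI[of _ h'] conjI)
qed

lemma higher_pderiv_vanishes_at_root:
  fixes a :: "'a::{idom,ring_char_0}" and g :: "'a poly"
  assumes "k < m"
  shows "poly ((pderiv ^^ k) ([:-a,1:]^m * g)) a = 0"
proof -
  obtain h where "(pderiv ^^ k) ([:-a,1:]^m * g) = [:-a,1:]^(m - k) * h"
    using higher_pderiv_linear_power_mult[of k m a g] assms less_imp_le by blast
  then show ?thesis using assms by (simp add: poly_power)
qed

lemma higher_pderiv_nonzero_at_root: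
  fixes a :: "'a::{idom,ring_char_0}" and g :: "'a poly"
  assumes "poly g a \<noteq> 0"
  shows "poly ((pderiv ^^ m) ([:-a,1:]^m * g)) a \<noteq> 0"
proof -
  obtain h where "(pderiv ^^ m) ([:-a,1:]^m * g) = [:-a,1:]^(m - m) * h" "poly h a \<noteq> 0"
    using higher_pderiv_linear_power_mult[of m m a g] assms by blast
  then show ?thesis by simp
qed

lemma higher_pderiv_eq_0_if_degree_less:
  fixes p :: "'a::{comm_semiring_1,semiring_no_zero_divisors} poly"
  assumes "degree p < k"
  shows "(pderiv ^^ k) p = 0"
  by (rule poly_eqI) (use assms in \<open>simp add: coeff_higher_pderiv coeff_eq_0\<close>)

lemma higher_deriv_poly: "(deriv ^^ k) (poly p) = poly ((pderiv ^^ k) (p :: complex poly))"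
proof (induction k)
  case 0
  then show ?case by simp
next
  case (Suc k)
  have "deriv (poly q) = poly (pderiv q)" for q :: "complex poly"
    by (rule ext, rule DERIV_imp_deriv, rule poly_DERIV)
  then show ?case using Suc by simp
qed

lemma not_poly_if_higher_derivs_nonzero:
  fixes f :: "complex \<Rightarrow> complex"
  assumes "\<And>k. (deriv ^^ k) f z \<noteq> 0"
  shows "\<not> (\<exists>p :: complex poly. \<forall>z. f z = poly p z)"
proof
  assume "\<exists>p :: complex poly. \<forall>z. f z = poly p z"
  then obtain p :: "complex poly" where "f = poly p" by blast
  then have "(deriv ^^ Suc (degree p)) f = poly 0"
    by (simp only: higher_deriv_poly higher_pderiv_eq_0_if_degree_less lessI)
  then show False using assms[of "Suc (degree p)"] by simp
qed

lemma higher_pderivs_bounded: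
  fixes p :: "complex poly"
  shows "\<exists>B. \<forall>k\<le>N. \<forall>z. norm z \<le> r \<longrightarrow> norm (poly ((pderiv ^^ k) p) z) \<le> B"
proof -
  let ?phi = "\<lambda>z. \<Sum>k\<le>N. norm (poly ((pderiv ^^ k) p) z)"
  have "continuous_on (cball 0 r) ?phi" by (intro continuous_intros)
  then have "compact (?phi ` cball 0 r)" by (intro compact_continuous_image) auto
  then obtain B where B: "\<forall>x\<in>?phi ` cball 0 r. norm x \<le> B"
    using compact_imp_bounded bounded_iff by metis
  have "norm (poly ((pderiv ^^ k) p) z) \<le> B" if "k \<le> N" "norm z \<le> r" for k z
  proof -
    have "norm (poly ((pderiv ^^ k) p) z) \<le> ?phi z"
      by (rule member_le_sum) (use that in auto)
    also have "\<dots> \<le> B" using B that(2) by (force simp: dist_norm)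
    finally show ?thesis .
  qed
  then show ?thesis by blast
qed

section \<open>Termwise differentiation of polynomial series\<close>

lemma poly_series_eventually_small:
  fixes P :: "nat \<Rightarrow> complex poly"
  assumes small: "\<And>n k z. k \<le> n \<Longrightarrow> norm z \<le> real n \<Longrightarrow>
                     norm (poly ((pderiv ^^ k) (P n)) z) \<le> (1/2)^n"
  shows "eventually (\<lambda>n. \<forall>z\<in>cball 0 R. norm (poly ((pderiv ^^ k) (P n)) z) \<le> (1/2)^n) sequentially"
  unfolding eventually_sequentially
proof (intro exI allI impI ballI)
  fix n z assume n: "max k (nat \<lceil>R\<rceil>) \<le> n" and "z \<in> cball (0::complex) R"
  then have "norm z \<le> real n" by (simp add: dist_norm)
  then show "norm (poly ((pderiv ^^ k) (P n)) z) \<le> (1/2)^n" using small n by simp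
qed

lemma poly_series_has_field_derivative:
  fixes P :: "nat \<Rightarrow> complex poly"
  assumes small: "\<And>n k z. k \<le> n \<Longrightarrow> norm z \<le> real n \<Longrightarrow>
                     norm (poly ((pderiv ^^ k) (P n)) z) \<le> (1/2)^n"
  shows "((\<lambda>z. \<Sum>n. poly ((pderiv ^^ k) (P n)) z) has_field_derivative
           (\<Sum>n. poly ((pderiv ^^ Suc k) (P n)) z)) (at z)"
proof -
  let ?S = "ball (0::complex) (norm z + 1)"
  have geometric: "summable (\<lambda>n::nat. (1/2::real)^n)" by simp
  have eventually_small: "eventually (\<lambda>n. \<forall>x\<in>cball 0 (norm z + 1).
      norm (poly ((pderiv ^^ i) (P n)) x) \<le> (1/2)^n) sequentially" for i
    using small by (rule poly_series_eventually_small)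
  have "eventually (\<lambda>n. \<forall>x\<in>?S. norm (poly ((pderiv ^^ Suc k) (P n)) x) \<le> (1/2)^n) sequentially"
    using eventually_small[of "Suc k"] by (rule eventually_mono) auto
  then have uniform: "uniformly_convergent_on ?S (\<lambda>n x. \<Sum>i<n. poly ((pderiv ^^ Suc k) (P i)) x)"
    using geometric by (rule Weierstrass_m_test'_ev)
  have "eventually (\<lambda>n. norm (poly ((pderiv ^^ k) (P n)) z) \<le> (1/2)^n) sequentially"
    using eventually_small[of k] by (rule eventually_mono) simp
  then have summable_at_z: "summable (\<lambda>n. poly ((pderiv ^^ k) (P n)) z)"
    using geometric by (metis (no_types, lifting) eventually_sequentially summable_comparison_test')
  have termwise: "((\<lambda>x. poly ((pderiv ^^ k) (P n)) x) has_field_derivative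
                    poly ((pderiv ^^ Suc k) (P n)) x) (at x within ?S)" for n x
    using poly_DERIV[of "(pderiv ^^ k) (P n)" x] by (simp add: has_field_derivative_at_within)
  show ?thesis
    by (rule has_field_derivative_series'(2)[OF convex_ball termwise uniform _ summable_at_z]) auto
qed

lemma poly_series_entire:
  fixes P :: "nat \<Rightarrow> complex poly"
  assumes small: "\<And>n k z. k \<le> n \<Longrightarrow> norm z \<le> real n \<Longrightarrow>
                     norm (poly ((pderiv ^^ k) (P n)) z) \<le> (1/2)^n"
  defines "F \<equiv> \<lambda>z. \<Sum>n. poly (P n) z"
  shows "F holomorphic_on UNIV"
    and "(deriv ^^ k) F = (\<lambda>z. \<Sum>n. poly ((pderiv ^^ k) (P n)) z)"
proof -
  note derivative = poly_series_has_field_derivative[OF small]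
  show "F holomorphic_on UNIV"
    unfolding F_def holomorphic_on_def field_differentiable_def
    using derivative[of 0] by (auto intro: has_field_derivative_at_within)
  show "(deriv ^^ k) F = (\<lambda>z. \<Sum>n. poly ((pderiv ^^ k) (P n)) z)"
  proof (induction k)
    case 0
    then show ?case by (simp add: F_def)
  next
    case (Suc k)
    then show ?case by (simp add: DERIV_imp_deriv[OF derivative])
  qed
qed

lemma smallness_thresholds:
  fixes Q :: "nat \<Rightarrow> complex poly"
  obtains e where "\<And>n. e n > 0"
    and "\<And>c n k z. norm c \<le> e n \<Longrightarrow> k \<le> n \<Longrightarrow> norm z \<le> real n \<Longrightarrow>
           norm (poly ((pderiv ^^ k) (smult c (Q n))) z) \<le> (1/2)^n"
proof -
  have "\<forall>n. \<exists>B. \<forall>k\<le>n. \<forall>z. norm z \<le> real n \<longrightarrow> norm (poly ((pderiv ^^ k) (Q n)) z) \<le> B"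
    using higher_pderivs_bounded by blast
  then obtain B where "\<forall>n. \<forall>k\<le>n. \<forall>z. norm z \<le> real n \<longrightarrow> norm (poly ((pderiv ^^ k) (Q n)) z) \<le> B n"
    by (metis choice)
  then have B: "\<And>n k z. k \<le> n \<Longrightarrow> norm z \<le> real n \<Longrightarrow> norm (poly ((pderiv ^^ k) (Q n)) z) \<le> B n"
    by blast
  define e where "e n = (1/2)^n / (1 + \<bar>B n\<bar>)" for n :: nat
  have e_pos: "e n > 0" for n unfolding e_def by (simp add: add_pos_nonneg)
  have "norm (poly ((pderiv ^^ k) (smult c (Q n))) z) \<le> (1/2)^n"
    if "norm c \<le> e n" "k \<le> n" "norm z \<le> real n" for c n k z
  proof -
    have "norm (poly ((pderiv ^^ k) (smult c (Q n))) z) \<le> e n * (1 + \<bar>B n\<bar>)"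
      unfolding higher_pderiv_smult poly_smult norm_mult
      using that(1) B[OF that(2,3)] e_pos[of n] by (intro mult_mono) auto
    also have "\<dots> = (1/2)^n" unfolding e_def by (simp add: add_pos_nonneg)
    finally show ?thesis .
  qed
  with e_pos show thesis by (rule that)
qed

section \<open>Greedy choice of coefficients\<close>

lemma dense_perturbation:
  fixes T :: "complex set"
  assumes dense: "closure T = UNIV" and "e > 0" "w \<noteq> 0"
  shows "\<exists>c. norm c \<le> e \<and> V + c * w \<in> T - {0}"
proof -
  have "ball V (e * norm w) - {0} \<noteq> {}"
  proof
    assume "ball V (e * norm w) - {0} = {}"
    then have "ball V (e * norm w) = {0}"
      using assms(2,3) by (metis centre_in_ball Diff_eq_empty_iff subset_singletonD empty_iff
          mult_pos_pos zero_less_norm_iff)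
    then show False using not_open_singleton open_ball by metis
  qed
  then have "(ball V (e * norm w) - {0}) \<inter> T \<noteq> {}"
    using open_Int_closure_eq_empty[of "ball V (e * norm w) - {0}" T] dense by auto
  then obtain t where "t \<in> ball V (e * norm w)" and t: "t \<in> T" "t \<noteq> 0" by blast
  then have "norm (t - V) < e * norm w" by (simp add: dist_norm norm_minus_commute)
  show ?thesis
  proof (intro exI conjI)
    show "norm ((t - V) / w) \<le> e"
      using \<open>norm (t - V) < e * norm w\<close> \<open>w \<noteq> 0\<close> by (simp add: norm_divide divide_le_eq)
    show "V + (t - V) / w * w \<in> T - {0}" using t \<open>w \<noteq> 0\<close> by simp
  qed
qed

text \<open>Given an infinite triangular system in which term i contributes \<open>c i * a i n\<close> to the
  n-th target value, coefficients of prescribed smallness can be chosen one after the other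
  so that every active target value \<open>\<Sum>i\<le>n. c i * a i n\<close> lies in T - {0}, provided the
  diagonal entries of active targets are nonzero; inactive terms get coefficient 0.\<close>
lemma greedy_coefficients:
  fixes T :: "complex set" and a :: "nat \<Rightarrow> nat \<Rightarrow> complex"
  assumes dense: "closure T = UNIV"
    and e_pos: "\<And>n. e n > 0"
    and diagonal: "\<And>n. act n \<Longrightarrow> a n n \<noteq> 0"
  shows "\<exists>c. \<forall>n. norm (c n) \<le> e n \<and> (\<not> act n \<longrightarrow> c n = 0) \<and>
               (act n \<longrightarrow> (\<Sum>i\<le>n. c i * a i n) \<in> T - {0})"
proof -
  have "\<exists>c. norm c \<le> e n \<and> (\<not> act n \<longrightarrow> c = 0) \<and> (act n \<longrightarrow> V + c * a n n \<in> T - {0})" for n V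
    using dense_perturbation[OF dense e_pos diagonal, of n] e_pos[of n]
    by (cases "act n") (auto intro: exI[of _ 0])
  then obtain pick where pick: "\<And>n V. norm (pick n V) \<le> e n \<and> (\<not> act n \<longrightarrow> pick n V = 0) \<and>
                                   (act n \<longrightarrow> V + pick n V * a n n \<in> T - {0})"
    by metis
  text \<open>The state after n steps is the vector of all partial target values.\<close>
  define partial where
    "partial = rec_nat (\<lambda>m. 0) (\<lambda>n V m. V m + pick n (V n) * a n m)"
  define c where "c n = pick n (partial n n)" for n
  have partial_sum: "partial n m = (\<Sum>i<n. c i * a i m)" for n m
    by (induction n arbitrary: m) (simp_all add: partial_def c_def)
  show ?thesis
  proof (intro exI allI)
    fix n
    have "(\<Sum>i\<le>n. c i * a i n) = partial n n + c n * a n n"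
      by (simp add: partial_sum lessThan_Suc_atMost[symmetric])
    moreover have "norm (c n) \<le> e n \<and> (\<not> act n \<longrightarrow> c n = 0) \<and>
        (act n \<longrightarrow> partial n n + c n * a n n \<in> T - {0})"
      unfolding c_def by (rule pick)
    ultimately show "norm (c n) \<le> e n \<and> (\<not> act n \<longrightarrow> c n = 0) \<and>
        (act n \<longrightarrow> (\<Sum>i\<le>n. c i * a i n) \<in> T - {0})" by simp
  qed
qed

section \<open>Interpolation polynomials\<close>

text \<open>A task list assigns to each index n (when active) a point \<open>pt n\<close> and a derivative
  order \<open>od n\<close>.\<close>
definition interp_poly ::
    "(nat \<Rightarrow> bool) \<Rightarrow> (nat \<Rightarrow> 'a::comm_ring_1) \<Rightarrow> (nat \<Rightarrow> nat) \<Rightarrow> nat \<Rightarrow> 'a poly" where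
  "interp_poly act pt od n =
     [:-pt n,1:]^od n * (\<Prod>j | j < n \<and> act j \<and> pt j \<noteq> pt n. [:-pt j,1:]^Suc (od j))"

text \<open>Its own task sees a nonzero derivative, since the other factors do not vanish there.\<close>
lemma interp_poly_own_task:
  fixes pt :: "nat \<Rightarrow> 'a::{idom,ring_char_0}"
  shows "poly ((pderiv ^^ od n) (interp_poly act pt od n)) (pt n) \<noteq> 0"
  unfolding interp_poly_def
  by (rule higher_pderiv_nonzero_at_root) (auto simp: poly_prod poly_power)

lemma interp_poly_earlier_task:
  fixes pt :: "nat \<Rightarrow> 'a::{idom,ring_char_0}"
  assumes "act j" "j < n" and increasing: "pt j = pt n \<Longrightarrow> od j < od n"
  shows "poly ((pderiv ^^ od j) (interp_poly act pt od n)) (pt j) = 0"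
proof (cases "pt j = pt n")
  case True
  then show ?thesis
    unfolding interp_poly_def by (simp add: higher_pderiv_vanishes_at_root increasing)
next
  case False
  define g where "g i = [:-pt i,1:]^Suc (od i)" for i
  define J where "J = {i. i < n \<and> act i \<and> pt i \<noteq> pt n}"
  have "j \<in> J" "finite J" using assms False unfolding J_def by auto
  then have "interp_poly act pt od n = g j * ([:-pt n,1:]^od n * (\<Prod>i\<in>J - {j}. g i))"
    unfolding interp_poly_def J_def[symmetric] g_def[symmetric]
    by (simp add: prod.remove mult.left_commute)
  then show ?thesis unfolding g_def by (simp only: higher_pderiv_vanishes_at_root lessI)
qed

theorem entire_interpolation:
  fixes T :: "complex set" and pt :: "nat \<Rightarrow> complex"
  assumes dense: "closure T = UNIV"
    and increasing: "\<And>j n. act j \<Longrightarrow> act n \<Longrightarrow> j < n \<Longrightarrow> pt j = pt n \<Longrightarrow> od j < od n"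
  shows "\<exists>F. F holomorphic_on UNIV \<and> (\<forall>n. act n \<longrightarrow> (deriv ^^ od n) F (pt n) \<in> T - {0})"
proof -
  define Q where "Q = interp_poly act pt od"
  obtain e where e_pos: "\<And>n. e n > 0"
    and scaled_small: "\<And>c n k z. norm c \<le> e n \<Longrightarrow> k \<le> n \<Longrightarrow> norm z \<le> real n \<Longrightarrow>
           norm (poly ((pderiv ^^ k) (smult c (Q n))) z) \<le> (1/2)^n"
    using smallness_thresholds[of Q] by blast
  define a where "a i n = poly ((pderiv ^^ od n) (Q i)) (pt n)" for i n
  have diagonal: "a n n \<noteq> 0" for n unfolding a_def Q_def by (rule interp_poly_own_task)
  have "\<exists>c. \<forall>n. norm (c n) \<le> e n \<and> (\<not> act n \<longrightarrow> c n = 0) \<and>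
                        (act n \<longrightarrow> (\<Sum>i\<le>n. c i * a i n) \<in> T - {0})"
    by (rule greedy_coefficients[OF dense]) (simp_all add: e_pos diagonal)
  then obtain c where c: "\<And>n. norm (c n) \<le> e n" "\<And>n. \<not> act n \<Longrightarrow> c n = 0"
      "\<And>n. act n \<Longrightarrow> (\<Sum>i\<le>n. c i * a i n) \<in> T - {0}"
    by blast
  define P where "P n = smult (c n) (Q n)" for n
  have small: "norm (poly ((pderiv ^^ k) (P n)) z) \<le> (1/2)^n" if "k \<le> n" "norm z \<le> real n" for n k z
    unfolding P_def using scaled_small[OF c(1) that] .
  define F where "F = (\<lambda>z. \<Sum>n. poly (P n) z)"
  have derivative_value: "(deriv ^^ od n) F (pt n) = (\<Sum>i\<le>n. c i * a i n)" if "act n" for n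
  proof -
    have "c i * a i n = 0" if "i \<notin> {..n}" for i
    proof (cases "act i")
      case True
      have "a i n = 0" unfolding a_def Q_def
        by (rule interp_poly_earlier_task) (use \<open>act n\<close> that increasing True in auto)
      then show ?thesis by simp
    next
      case False
      then show ?thesis using c(2) by simp
    qed
    then have "(\<lambda>i. c i * a i n) sums (\<Sum>i\<le>n. c i * a i n)" by (intro sums_finite) auto
    moreover have "(deriv ^^ od n) F = (\<lambda>z. \<Sum>i. poly ((pderiv ^^ od n) (P i)) z)"
      unfolding F_def by (rule poly_series_entire(2)[OF small])
    ultimately show ?thesis
      unfolding P_def a_def by (simp add: higher_pderiv_smult sums_iff)
  qed
  have "F holomorphic_on UNIV" unfolding F_def by (rule poly_series_entire(1)[OF small])
  moreover have "(deriv ^^ od n) F (pt n) \<in> T - {0}" if "act n" for n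
    using derivative_value[OF that] c(3)[OF that] by simp
  ultimately show ?thesis by blast
qed

section \<open>Enumerating the tasks\<close>

lemma triangle_mono: "a \<le> b \<Longrightarrow> triangle a \<le> triangle b"
proof -
  have "triangle a \<le> triangle (a + d)" for d by (induction d) auto
  then show "a \<le> b \<Longrightarrow> triangle a \<le> triangle b" by (metis le_add_diff_inverse)
qed

lemma prod_encode_mono_snd: "s \<le> t \<Longrightarrow> prod_encode (i, s) \<le> prod_encode (i, t)"
  unfolding prod_encode_def using triangle_mono[of "i + s" "i + t"] by simp

lemma countable_task_list:
  fixes S :: "'a set"
  assumes "countable S"
  obtains act :: "nat \<Rightarrow> bool" and pt :: "nat \<Rightarrow> 'a" and od :: "nat \<Rightarrow> nat" where
    "\<And>j n. act j \<Longrightarrow> act n \<Longrightarrow> j < n \<Longrightarrow> pt j = pt n \<Longrightarrow> od j < od n"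
    "\<And>\<sigma> s. \<sigma> \<in> S \<Longrightarrow> \<exists>n. act n \<and> pt n = \<sigma> \<and> od n = s"
proof -
  define act where "act n \<longleftrightarrow> fst (prod_decode n) \<in> to_nat_on S ` S" for n
  define pt where "pt n = from_nat_into S (fst (prod_decode n))" for n
  define od where "od n = snd (prod_decode n)" for n
  have complete: "\<exists>n. act n \<and> pt n = \<sigma> \<and> od n = s" if "\<sigma> \<in> S" for \<sigma> s
    using that assms unfolding act_def pt_def od_def
    by (intro exI[of _ "prod_encode (to_nat_on S \<sigma>, s)"]) auto
  have ordered: "od j < od n" if "act j" "act n" "j < n" "pt j = pt n" for j n
  proof (rule ccontr)
    have same_point: "fst (prod_decode j) = fst (prod_decode n)"
      using that unfolding act_def pt_def by (metis to_nat_on_from_nat_into)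
    assume "\<not> od j < od n"
    then have "prod_encode (fst (prod_decode n), od n) \<le> prod_encode (fst (prod_decode j), od j)"
      using same_point by (simp add: prod_encode_mono_snd)
    then show False using \<open>j < n\<close> unfolding od_def by simp
  qed
  show thesis by (rule that[OF ordered complete])
qed

theorem entire_derivatives_in_dense_set:
  fixes S T :: "complex set"
  assumes "countable S" and dense: "closure T = UNIV"
  shows "\<exists>F. F holomorphic_on UNIV \<and> (\<forall>s. \<forall>\<sigma>\<in>S. (deriv ^^ s) F \<sigma> \<in> T - {0})"
proof -
  obtain act :: "nat \<Rightarrow> bool" and pt :: "nat \<Rightarrow> complex" and od :: "nat \<Rightarrow> nat" where
    increasing: "\<And>j n. act j \<Longrightarrow> act n \<Longrightarrow> j < n \<Longrightarrow> pt j = pt n \<Longrightarrow> od j < od n"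
    and complete: "\<And>\<sigma> s. \<sigma> \<in> S \<Longrightarrow> \<exists>n. act n \<and> pt n = \<sigma> \<and> od n = s"
    using countable_task_list[OF \<open>countable S\<close>] by blast
  have "\<exists>F. F holomorphic_on UNIV \<and> (\<forall>n. act n \<longrightarrow> (deriv ^^ od n) F (pt n) \<in> T - {0})"
    using dense increasing by (rule entire_interpolation)
  then obtain F where F: "F holomorphic_on UNIV" "\<forall>n. act n \<longrightarrow> (deriv ^^ od n) F (pt n) \<in> T - {0}"
    by blast
  have "(deriv ^^ s) F \<sigma> \<in> T - {0}" if "\<sigma> \<in> S" for s \<sigma>
    using complete[OF that, of s] F(2) by blast
  with F(1) show ?thesis by blast
qed

theorem corollary1:
  fixes \<Sigma> T :: "complex set"
  assumes "countable \<Sigma>"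
    and "closure T = UNIV"
  shows "\<exists>f. transcendental_entire f \<and> (\<forall>s::nat. ((deriv ^^ s) f) ` \<Sigma> \<subseteq> T)"
proof -
  have "countable (insert 0 \<Sigma>)" using assms(1) by simp
  then obtain F where entire: "F holomorphic_on UNIV"
    and derivs_in_T: "\<forall>s. \<forall>\<sigma>\<in>insert 0 \<Sigma>. (deriv ^^ s) F \<sigma> \<in> T - {0}"
    using entire_derivatives_in_dense_set[OF _ assms(2)] by blast
  have "\<not> (\<exists>p :: complex poly. \<forall>z. F z = poly p z)"
    by (rule not_poly_if_higher_derivs_nonzero[of F 0]) (use derivs_in_T in blast)
  then have "transcendental_entire F"
    unfolding transcendental_entire_def using entire by blast
  moreover have "(deriv ^^ s) F ` \<Sigma> \<subseteq> T" for s using derivs_in_T by blast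
  ultimately show ?thesis by blast
qed

end
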